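(* Let $d$ be a prime power, $\beta>0$, $0\le\eta\le 1$, and let $\rho^{\mathrm{iso}}_{a|x}(\eta)=\eta\frac1d|\phi^a_x\rangle\langle\phi^a_x|+(1-\eta)\frac{\mathbb{I}}{d^2}$, $a\in\{0,\dots,d-1\}$, $x\in\{0,\dots,d\}$, built from a complete set of $d+1$ mutually unbiased bases of $\mathbb{C}^d$. If $\eta>\Big(\sqrt d+\frac{1}{d+\sqrt d+1}\Big)^{-1}$, then $$\xi_{\max}\big(\{\rho^{\mathrm{iso}}_{a|x}(\eta)\}_{a,x}\big)\ \ge\ \frac{(d+1)\big(1+\eta(d-1)\big)}{d(1+\sqrt d)}\ >\ 1;$$ in particular for $\eta=1$, $\xi_{\max}\ge\frac{d+1}{\sqrt d+1}$.
   Context: A complete set of MUBs: $d+1$ orthonormal bases $\{|\phi^a_x\rangle\}_a$ of $\mathbb{C}^d$ with $|\langle\phi^a_x|\phi^b_y\rangle|=1/\sqrt d$ for $x\ne y$. For an assemblage $\{\rho_{a|x}\}$ (PSD operators $\rho_{a|x}=\operatorname{Tr}_A[(M_{a|x}\otimes\mathbb{I})\rho_{AB}]$) with $p(a|x)=\operatorname{Tr}\rho_{a|x}$ and Hermitian $H_{a|x}$ on $\mathbb{C}^d$, $Q_c(\{\rho_{a|x}\},\{H_{a|x}\})=\frac1n\sum_{a,x}[\operatorname{Tr}(H_{a|x}\rho_{a|x})-\operatorname{Tr}(H_{a|x}\gamma_{a|x})]$ with $\gamma_{a|x}=p(a|x)e^{-\beta H_{a|x}}/\operatorname{Tr}e^{-\beta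 H_{a|x}}$, $n$ the number of inputs. $\mathcal{L}$ is the set of unsteerable assemblages (those with $\rho_{a|x}=\int d\lambda\,p(\lambda)p(a|x,\lambda)\sigma_\lambda$), $\mathcal{L}_\rho=\{\{\sigma_{a|x}\}\in\mathcal{L}:\operatorname{Tr}\sigma_{a|x}=\operatorname{Tr}\rho_{a|x}\ \forall a,x\}$, and $\xi_{\max}(\{\rho_{a|x}\})=\sup_{\{H_{a|x}\}} Q_c(\{\rho_{a|x}\},\{H_{a|x}\})/\max_{\{\sigma_{a|x}\}\in\mathcal{L}_\rho}Q_c(\{\sigma_{a|x}\},\{H_{a|x}\})$, the supremum over Hermitian families with strictly positive denominator. *)

theory Defs
  imports "HOL-Analysis.Analysis" "HOL-Computational_Algebra.Primes"
    "Jordan_Normal_Form.Matrix" "Jordan_Normal_Form.Conjugate"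
begin

definition mtrace :: "complex mat \<Rightarrow> complex" where
  "mtrace A = (\<Sum>i<dim_row A. A $$ (i,i))"

definition herm :: "nat \<Rightarrow> complex mat \<Rightarrow> bool" where
  "herm n A \<longleftrightarrow> A \<in> carrier_mat n n \<and>
     (\<forall>i<n. \<forall>j<n. A $$ (i,j) = cnj (A $$ (j,i)))"

definition psd :: "nat \<Rightarrow> complex mat \<Rightarrow> bool" where
  "psd n A \<longleftrightarrow> herm n A \<and>
     (\<forall>v \<in> carrier_vec n. 0 \<le> Re (conjugate v \<bullet> (A *\<^sub>v v)))"

definition density :: "nat \<Rightarrow> complex mat \<Rightarrow> bool" where
  "density n A \<longleftrightarrow> psd n A \<and> mtrace A = 1"

definition mexp :: "nat \<Rightarrow> complex mat \<Rightarrow> complex mat" where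
  "mexp n A = mat n n (\<lambda>(i,j). \<Sum>k. (A ^\<^sub>m k) $$ (i,j) / of_nat (fact k))"

definition proj :: "nat \<Rightarrow> complex vec \<Rightarrow> complex mat" where
  "proj n v = mat n n (\<lambda>(i,j). v $ i * cnj (v $ j))"

definition gibbs :: "nat \<Rightarrow> real \<Rightarrow> real \<Rightarrow> complex mat \<Rightarrow> complex mat" where
  "gibbs n \<beta> p H =
     (complex_of_real p / mtrace (mexp n ((- complex_of_real \<beta>) \<cdot>\<^sub>m H))) \<cdot>\<^sub>m
       mexp n ((- complex_of_real \<beta>) \<cdot>\<^sub>m H)"

text \<open>Assemblages and Hamiltonian families are indexed as rho a x
  (outcome a < na, input x < nx).\<close>
definition Qc :: "nat \<Rightarrow> nat \<Rightarrow> nat \<Rightarrow> real \<Rightarrow>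
     (nat \<Rightarrow> nat \<Rightarrow> complex mat) \<Rightarrow> (nat \<Rightarrow> nat \<Rightarrow> complex mat) \<Rightarrow> real" where
  "Qc n na nx \<beta> \<rho> H = (1 / real nx) *
     (\<Sum>x<nx. \<Sum>a<na. Re (mtrace (H a x * \<rho> a x)
        - mtrace (H a x * gibbs n \<beta> (Re (mtrace (\<rho> a x))) (H a x))))"

definition unsteerable :: "nat \<Rightarrow> nat \<Rightarrow> nat \<Rightarrow> (nat \<Rightarrow> nat \<Rightarrow> complex mat) \<Rightarrow> bool" where
  "unsteerable n na nx \<sigma> \<longleftrightarrow>
     (\<exists>(\<Lambda>::nat set) (pl :: nat \<Rightarrow> real) (pax :: nat \<Rightarrow> nat \<Rightarrow> nat \<Rightarrow> real) sl.
        finite \<Lambda> \<and> (\<forall>l\<in>\<Lambda>. 0 \<le> pl l) \<and> sum pl \<Lambda> = 1 \<and>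
        (\<forall>l\<in>\<Lambda>. \<forall>x<nx. (\<forall>a<na. 0 \<le> pax a x l) \<and> (\<Sum>a<na. pax a x l) = 1) \<and>
        (\<forall>l\<in>\<Lambda>. density n (sl l)) \<and>
        (\<forall>x<nx. \<forall>a<na. \<sigma> a x \<in> carrier_mat n n \<and>
           (\<forall>i<n. \<forall>j<n. \<sigma> a x $$ (i,j) =
              (\<Sum>l\<in>\<Lambda>. complex_of_real (pl l * pax a x l) * sl l $$ (i,j)))))"

definition Lrho :: "nat \<Rightarrow> nat \<Rightarrow> nat \<Rightarrow> (nat \<Rightarrow> nat \<Rightarrow> complex mat)
     \<Rightarrow> (nat \<Rightarrow> nat \<Rightarrow> complex mat) set" where
  "Lrho n na nx \<rho> = {\<sigma>. unsteerable n na nx \<sigma> \<and>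
     (\<forall>x<nx. \<forall>a<na. mtrace (\<sigma> a x) = mtrace (\<rho> a x))}"

text \<open>max over L_rho of Q_c (the maximum is attained; we write Sup).\<close>
definition Qmax :: "nat \<Rightarrow> nat \<Rightarrow> nat \<Rightarrow> real \<Rightarrow>
     (nat \<Rightarrow> nat \<Rightarrow> complex mat) \<Rightarrow> (nat \<Rightarrow> nat \<Rightarrow> complex mat) \<Rightarrow> real" where
  "Qmax n na nx \<beta> \<rho> H = Sup ((\<lambda>\<sigma>. Qc n na nx \<beta> \<sigma> H) ` Lrho n na nx \<rho>)"

definition xi_max :: "nat \<Rightarrow> nat \<Rightarrow> nat \<Rightarrow> real \<Rightarrow>
     (nat \<Rightarrow> nat \<Rightarrow> complex mat) \<Rightarrow> ereal" where
  "xi_max n na nx \<beta> \<rho> = Sup {ereal (Qc n na nx \<beta> \<rho> H / Qmax n na nx \<beta> \<rho> H) | H.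
     (\<forall>x<nx. \<forall>a<na. herm n (H a x)) \<and> 0 < Qmax n na nx \<beta> \<rho> H}"

definition complete_MUB :: "nat \<Rightarrow> (nat \<Rightarrow> nat \<Rightarrow> complex vec) \<Rightarrow> bool" where
  "complete_MUB d \<phi> \<longleftrightarrow>
     (\<forall>x\<le>d. \<forall>a<d. \<phi> x a \<in> carrier_vec d) \<and>
     (\<forall>x\<le>d. \<forall>a<d. \<forall>b<d. conjugate (\<phi> x a) \<bullet> \<phi> x b = (if a = b then 1 else 0)) \<and>
     (\<forall>x\<le>d. \<forall>y\<le>d. x \<noteq> y \<longrightarrow> (\<forall>a<d. \<forall>b<d.
        cmod (conjugate (\<phi> x a) \<bullet> \<phi> y b) = 1 / sqrt (real d)))"

definition rho_iso :: "nat \<Rightarrow> (nat \<Rightarrow> nat \<Rightarrow> complex vec) \<Rightarrow> real \<Rightarrow> nat \<Rightarrow> nat \<Rightarrow> complex mat" where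
  "rho_iso d \<phi> \<eta> a x =
     complex_of_real (\<eta> / real d) \<cdot>\<^sub>m proj d (\<phi> x a)
     + complex_of_real ((1 - \<eta>) / (real d)^2) \<cdot>\<^sub>m 1\<^sub>m d"

definition prime_power :: "nat \<Rightarrow> bool" where
  "prime_power d \<longleftrightarrow> (\<exists>p k. prime p \<and> 1 \<le> k \<and> d = p ^ k)"

end

theory Submission
  imports Defs
begin

text \<open>Take the projectors \<open>H a x = |\<phi> x a\<rangle>\<langle>\<phi> x a|\<close> as Hamiltonians. Every assemblage
  in \<open>L\<^sub>\<rho>\<close> has the uniform marginals \<open>1/d\<close> of \<open>\<rho>\<^sup>i\<^sup>s\<^sup>o\<close>, so all its Gibbs terms equal the
  constant \<open>g = e\<^sup>-\<^sup>\<beta> / (d - 1 + e\<^sup>-\<^sup>\<beta>)\<close> and \<open>Q\<^sub>c = W / (d + 1) - g\<close>, where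
  \<open>W = \<Sum>\<^sub>x\<^sub>,\<^sub>a \<langle>\<phi> x a|\<sigma> a x|\<phi> x a\<rangle>\<close>. For \<open>\<rho>\<^sup>i\<^sup>s\<^sup>o\<close> one computes
  \<open>W = (d + 1) (1 + \<eta> (d - 1)) / d\<close>. For an unsteerable assemblage \<open>W\<close> is a convex
  combination, over hidden states \<open>s\<close>, of sums \<open>\<Sum>\<^sub>x \<langle>v\<^sub>x|s|v\<^sub>x\<rangle>\<close> with one vector \<open>v\<^sub>x\<close>
  from each basis, and these are at most \<open>1 + sqrt d\<close> by the MUB uncertainty relation.
  The maximally mixed assemblage shows that the maximum of \<open>Q\<^sub>c\<close> over \<open>L\<^sub>\<rho>\<close> is positive,
  and \<open>(A - g) / (B - g) \<ge> A / B\<close> for \<open>A \<ge> B > g > 0\<close> gives the bound.\<close>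

section \<open>Sesquilinear forms\<close>

definition cinner :: "nat \<Rightarrow> (nat \<Rightarrow> complex) \<Rightarrow> (nat \<Rightarrow> complex) \<Rightarrow> complex" where
  "cinner n u w = (\<Sum>j<n. cnj (u j) * w j)"

text \<open>\<open>\<langle>u|A|w\<rangle>\<close> for vectors given as coordinate functions, so that vectors built from sums
  and indicator functions need no dimension bookkeeping.\<close>
definition sesq :: "nat \<Rightarrow> complex mat \<Rightarrow> (nat \<Rightarrow> complex) \<Rightarrow> (nat \<Rightarrow> complex) \<Rightarrow> complex" where
  "sesq n A u w = (\<Sum>i<n. \<Sum>j<n. cnj (u i) * A $$ (i,j) * w j)"

lemma sesq_conv_scalar_prod:
  assumes "A \<in> carrier_mat n n" and "v \<in> carrier_vec n"
  shows "conjugate v \<bullet> (A *\<^sub>v v) = sesq n A (vec_index v) (vec_index v)"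
  using assms unfolding sesq_def
  by (auto simp: scalar_prod_def row_def sum_distrib_left mult.assoc atLeast0LessThan intro!: sum.cong)

lemma sesq_psd_nonneg:
  assumes "psd n A"
  shows "0 \<le> Re (sesq n A u u)"
proof -
  have A: "A \<in> carrier_mat n n" using assms unfolding psd_def herm_def by blast
  have "sesq n A u u = sesq n A (vec_index (vec n u)) (vec_index (vec n u))"
    unfolding sesq_def by (intro sum.cong) auto
  also have "\<dots> = conjugate (vec n u) \<bullet> (A *\<^sub>v vec n u)"
    using A by (simp add: sesq_conv_scalar_prod)
  finally show ?thesis using assms unfolding psd_def by simp
qed

lemma sesq_herm_swap:
  assumes "herm n A"
  shows "sesq n A w u = cnj (sesq n A u w)"
proof -
  have "sesq n A w u = (\<Sum>j<n. \<Sum>i<n. cnj (w i) * A $$ (i,j) * u j)"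
    unfolding sesq_def by (rule sum.swap)
  also have "\<dots> = (\<Sum>j<n. \<Sum>i<n. cnj (cnj (u j) * A $$ (j,i) * w i))"
  proof (intro sum.cong refl)
    fix i j assume "i \<in> {..<n}" "j \<in> {..<n}"
    then have "A $$ (i,j) = cnj (A $$ (j,i))" using assms unfolding herm_def by blast
    then show "cnj (w i) * A $$ (i,j) * u j = cnj (cnj (u j) * A $$ (j,i) * w i)"
      by (simp add: mult_ac)
  qed
  also have "\<dots> = cnj (sesq n A u w)" by (simp add: sesq_def)
  finally show ?thesis .
qed

lemma sesq_add_scaled:
  "sesq n A (\<lambda>i. u i + t * w i) (\<lambda>i. u i + t * w i)
   = sesq n A u u + t * sesq n A u w + cnj t * sesq n A w u + cnj t * t * sesq n A w w"
  unfolding sesq_def by (simp add: sum.distrib sum_distrib_left ring_distribs mult_ac)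

lemma sesq_sum_right:
  "sesq n A u (\<lambda>i. \<Sum>y\<in>Y. g y * w y i) = (\<Sum>y\<in>Y. g y * sesq n A u (w y))"
proof -
  have "sesq n A u (\<lambda>i. \<Sum>y\<in>Y. g y * w y i)
      = (\<Sum>i<n. \<Sum>j<n. \<Sum>y\<in>Y. g y * (cnj (u i) * A $$ (i,j) * w y j))"
    unfolding sesq_def by (simp add: sum_distrib_left mult_ac)
  also have "\<dots> = (\<Sum>y\<in>Y. \<Sum>i<n. \<Sum>j<n. g y * (cnj (u i) * A $$ (i,j) * w y j))"
    by (simp only: sum.swap[where B = Y])
  finally show ?thesis by (simp add: sesq_def sum_distrib_left)
qed

lemma sesq_sum_left:
  "sesq n A (\<lambda>i. \<Sum>y\<in>Y. g y * w y i) u = (\<Sum>y\<in>Y. cnj (g y) * sesq n A (w y) u)"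
proof -
  have "sesq n A (\<lambda>i. \<Sum>y\<in>Y. g y * w y i) u
      = (\<Sum>i<n. \<Sum>j<n. \<Sum>y\<in>Y. cnj (g y) * (cnj (w y i) * A $$ (i,j) * u j))"
    unfolding sesq_def by (simp add: sum_distrib_left sum_distrib_right cnj_sum mult_ac)
  also have "\<dots> = (\<Sum>y\<in>Y. \<Sum>i<n. \<Sum>j<n. cnj (g y) * (cnj (w y i) * A $$ (i,j) * u j))"
    by (simp only: sum.swap[where B = Y])
  finally show ?thesis by (simp add: sesq_def sum_distrib_left)
qed

lemma sesq_sum_mat:
  assumes "\<And>i j. i < n \<Longrightarrow> j < n \<Longrightarrow> A $$ (i,j) = (\<Sum>l\<in>L. c l * B l $$ (i,j))"
  shows "sesq n A u w = (\<Sum>l\<in>L. c l * sesq n (B l) u w)"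
proof -
  have "sesq n A u w = (\<Sum>i<n. \<Sum>j<n. \<Sum>l\<in>L. c l * (cnj (u i) * B l $$ (i,j) * w j))"
    unfolding sesq_def using assms
    by (intro sum.cong refl) (simp add: sum_distrib_left sum_distrib_right mult_ac)
  also have "\<dots> = (\<Sum>l\<in>L. \<Sum>i<n. \<Sum>j<n. c l * (cnj (u i) * B l $$ (i,j) * w j))"
    by (simp only: sum.swap[where B = L])
  finally show ?thesis by (simp add: sesq_def sum_distrib_left)
qed

lemma sesq_smult: "A \<in> carrier_mat n n \<Longrightarrow> sesq n (c \<cdot>\<^sub>m A) u w = c * sesq n A u w"
  unfolding sesq_def by (simp add: sum_distrib_left mult_ac)

lemma sesq_add:
  "A \<in> carrier_mat n n \<Longrightarrow> B \<in> carrier_mat n n \<Longrightarrow> sesq n (A + B) u w = sesq n A u w + sesq n B u w"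
  unfolding sesq_def by (simp add: sum.distrib algebra_simps)

lemma sesq_one: "sesq n (1\<^sub>m n) u w = cinner n u w"
proof -
  have "sesq n (1\<^sub>m n) u w = (\<Sum>i<n. \<Sum>j<n. if i = j then cnj (u i) * w j else 0)"
    unfolding sesq_def by (intro sum.cong) auto
  then show ?thesis by (simp add: cinner_def)
qed

lemma sesq_basis_left:
  assumes "j < n"
  shows "sesq n A (\<lambda>i. if i = j then 1 else 0) u = (\<Sum>i<n. A $$ (j,i) * u i)"
proof -
  have "sesq n A (\<lambda>i. if i = j then 1 else 0) u = (\<Sum>i<n. if i = j then (\<Sum>k<n. A $$ (i,k) * u k) else 0)"
    unfolding sesq_def by (intro sum.cong) (auto simp: mult.assoc)
  then show ?thesis using assms by simp
qed

lemma sum_sesq_basis: "A \<in> carrier_mat n n \<Longrightarrow>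
  (\<Sum>j<n. sesq n A (\<lambda>i. if i = j then 1 else 0) (\<lambda>i. if i = j then 1 else 0)) = mtrace A"
  unfolding mtrace_def by (simp add: sesq_basis_left if_distrib cong: if_cong)

text \<open>Expand the form at \<open>u + t w\<close> with \<open>|t| = 1\<close> chosen to make the cross term
  \<open>-2 |sesq n A u w|\<close>.\<close>
lemma norm_sesq_le_psd:
  assumes "psd n A"
  shows "cmod (sesq n A u w) \<le> (Re (sesq n A u u) + Re (sesq n A w w)) / 2"
proof (cases "sesq n A u w = 0")
  case True
  then show ?thesis using sesq_psd_nonneg[OF assms, of u] sesq_psd_nonneg[OF assms, of w] by simp
next
  case False
  define z where "z = sesq n A u w"
  define t where "t = - (cnj z / complex_of_real (cmod z))"
  have z: "cmod z > 0" using False z_def by simp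
  have zz: "cnj z * z = complex_of_real (cmod z) * complex_of_real (cmod z)"
    using complex_norm_square[of z] by (simp add: power2_eq_square mult.commute)
  have tz: "t * z = - complex_of_real (cmod z)"
    using z zz unfolding t_def by (simp add: field_simps)
  have tt: "cnj t * t = 1"
    using z zz unfolding t_def by (simp add: field_simps)
  have wu: "sesq n A w u = cnj z"
    using assms sesq_herm_swap unfolding psd_def z_def by blast
  have "0 \<le> Re (sesq n A (\<lambda>i. u i + t * w i) (\<lambda>i. u i + t * w i))"
    by (rule sesq_psd_nonneg[OF assms])
  also have "\<dots> = Re (sesq n A u u) - 2 * cmod z + Re (sesq n A w w)"
    unfolding sesq_add_scaled wu tt z_def[symmetric] using tz
    by (simp add: complex_cnj_mult[symmetric] del: complex_cnj_mult)
  finally show ?thesis unfolding z_def by simp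
qed

section \<open>An uncertainty relation for nearly unbiased vectors\<close>

text \<open>Column \<open>j\<close> of the frame operator \<open>\<Sum>\<^sub>x\<^sub>\<in>\<^sub>X |v x\<rangle>\<langle>v x|\<close>.\<close>
definition frame_column :: "'a set \<Rightarrow> ('a \<Rightarrow> nat \<Rightarrow> complex) \<Rightarrow> nat \<Rightarrow> nat \<Rightarrow> complex" where
  "frame_column X v j = (\<lambda>i. \<Sum>x\<in>X. cnj (v x j) * v x i)"

lemma sum_sesq_basis_frame_column:
  "(\<Sum>j<n. sesq n A (\<lambda>i. if i = j then 1 else 0) (frame_column X v j)) = (\<Sum>x\<in>X. sesq n A (v x) (v x))"
proof -
  have "(\<Sum>j<n. sesq n A (\<lambda>i. if i = j then 1 else 0) (frame_column X v j))
      = (\<Sum>j<n. \<Sum>x\<in>X. cnj (v x j) * (\<Sum>i<n. A $$ (j,i) * v x i))"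
    unfolding frame_column_def by (simp add: sesq_sum_right sesq_basis_left)
  also have "\<dots> = (\<Sum>x\<in>X. \<Sum>j<n. cnj (v x j) * (\<Sum>i<n. A $$ (j,i) * v x i))"
    by (rule sum.swap)
  finally show ?thesis by (simp add: sesq_def sum_distrib_left mult.assoc)
qed

lemma sum_sesq_frame_column:
  "(\<Sum>j<n. sesq n A (frame_column X v j) (frame_column X v j))
   = (\<Sum>x\<in>X. \<Sum>y\<in>X. cinner n (v y) (v x) * sesq n A (v x) (v y))"
proof -
  have "(\<Sum>j<n. sesq n A (frame_column X v j) (frame_column X v j))
      = (\<Sum>j<n. \<Sum>y\<in>X. \<Sum>x\<in>X. v x j * (cnj (v y j) * sesq n A (v x) (v y)))"
    unfolding frame_column_def sesq_sum_right sesq_sum_left by (simp add: sum_distrib_left mult_ac)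
  also have "\<dots> = (\<Sum>y\<in>X. \<Sum>j<n. \<Sum>x\<in>X. v x j * (cnj (v y j) * sesq n A (v x) (v y)))"
    by (rule sum.swap)
  also have "\<dots> = (\<Sum>y\<in>X. \<Sum>x\<in>X. \<Sum>j<n. v x j * (cnj (v y j) * sesq n A (v x) (v y)))"
    by (rule sum.cong[OF refl], rule sum.swap)
  also have "\<dots> = (\<Sum>x\<in>X. \<Sum>y\<in>X. \<Sum>j<n. v x j * (cnj (v y j) * sesq n A (v x) (v y)))"
    by (rule sum.swap)
  also have "\<dots> = (\<Sum>x\<in>X. \<Sum>y\<in>X. cinner n (v y) (v x) * sesq n A (v x) (v y))"
    by (simp add: cinner_def sum_distrib_left sum_distrib_right mult_ac)
  finally show ?thesis .
qed

lemma Re_sum_overlap_sesq_le: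
  assumes A: "psd n A" and X: "finite X" and c: "0 \<le> c"
    and norm: "\<And>x. x \<in> X \<Longrightarrow> cinner n (v x) (v x) = 1"
    and overlap: "\<And>x y. x \<in> X \<Longrightarrow> y \<in> X \<Longrightarrow> x \<noteq> y \<Longrightarrow> cmod (cinner n (v y) (v x)) \<le> c"
  shows "Re (\<Sum>x\<in>X. \<Sum>y\<in>X. cinner n (v y) (v x) * sesq n A (v x) (v y))
         \<le> (1 + c * (real (card X) - 1)) * (\<Sum>x\<in>X. Re (sesq n A (v x) (v x)))"
proof -
  define b where "b x = Re (sesq n A (v x) (v x))" for x
  define S where "S = (\<Sum>x\<in>X. b x)"
  have pointwise: "Re (cinner n (v y) (v x) * sesq n A (v x) (v y))
      \<le> c * (b x + b y) / 2 + (if x = y then (1 - c) * b x else 0)"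
    if "x \<in> X" "y \<in> X" for x y
  proof (cases "x = y")
    case True
    then show ?thesis using norm[OF that(1)] by (simp add: b_def algebra_simps)
  next
    case False
    have "Re (cinner n (v y) (v x) * sesq n A (v x) (v y))
        \<le> cmod (cinner n (v y) (v x)) * cmod (sesq n A (v x) (v y))"
      by (metis complex_Re_le_cmod norm_mult)
    also have "\<dots> \<le> c * ((b x + b y) / 2)"
      unfolding b_def
      by (intro mult_mono overlap norm_sesq_le_psd[OF A] c norm_ge_zero that False)
    finally show ?thesis using False by simp
  qed
  have pairs: "(\<Sum>x\<in>X. \<Sum>y\<in>X. c * (b x + b y) / 2) = c * real (card X) * S"
  proof -
    have "(\<Sum>x\<in>X. \<Sum>y\<in>X. c * (b x + b y) / 2) = c / 2 * (\<Sum>x\<in>X. \<Sum>y\<in>X. b x + b y)"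
      by (simp add: sum_distrib_left)
    also have "(\<Sum>x\<in>X. \<Sum>y\<in>X. b x + b y) = real (card X) * S + real (card X) * S"
      using X by (simp add: S_def sum.distrib sum_distrib_left)
    finally show ?thesis by simp
  qed
  have "Re (\<Sum>x\<in>X. \<Sum>y\<in>X. cinner n (v y) (v x) * sesq n A (v x) (v y))
      \<le> (\<Sum>x\<in>X. \<Sum>y\<in>X. c * (b x + b y) / 2 + (if x = y then (1 - c) * b x else 0))"
    unfolding Re_sum by (intro sum_mono pointwise)
  also have "\<dots> = (\<Sum>x\<in>X. \<Sum>y\<in>X. c * (b x + b y) / 2) + (\<Sum>x\<in>X. (1 - c) * b x)"
    unfolding sum.distrib using X by simp
  also have "\<dots> = c * real (card X) * S + (1 - c) * S"
    unfolding pairs S_def by (simp add: sum_distrib_left)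
  finally show ?thesis by (simp add: S_def b_def algebra_simps)
qed

text \<open>With \<open>K\<close> the frame operator and \<open>C = 1 + c (card X - 1)\<close>, expand
  \<open>0 \<le> tr (A (1 - K/C)\<^sup>2)\<close> and use \<open>tr (A K\<^sup>2) \<le> C tr (A K)\<close> to get \<open>tr (A K) \<le> C\<close>.\<close>
lemma sum_sesq_le_overlap_bound:
  assumes A: "density n A" and X: "finite X" "X \<noteq> {}" and c: "0 \<le> c"
    and norm: "\<And>x. x \<in> X \<Longrightarrow> cinner n (v x) (v x) = 1"
    and overlap: "\<And>x y. x \<in> X \<Longrightarrow> y \<in> X \<Longrightarrow> x \<noteq> y \<Longrightarrow> cmod (cinner n (v y) (v x)) \<le> c"
  shows "(\<Sum>x\<in>X. Re (sesq n A (v x) (v x))) \<le> 1 + c * (real (card X) - 1)"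
proof -
  have psd: "psd n A" and tr: "mtrace A = 1" using A unfolding density_def by auto
  have herm: "herm n A" using psd unfolding psd_def by blast
  then have carrier: "A \<in> carrier_mat n n" unfolding herm_def by blast
  define C where "C = 1 + c * (real (card X) - 1)"
  define S where "S = (\<Sum>x\<in>X. Re (sesq n A (v x) (v x)))"
  define e :: "nat \<Rightarrow> nat \<Rightarrow> complex" where "e j = (\<lambda>i. if i = j then 1 else 0)" for j
  define k where "k = frame_column X v"
  define r where "r = - 1 / C"
  have "card X \<ge> 1" using X by (simp add: Suc_le_eq card_gt_0_iff)
  then have C: "C \<ge> 1" unfolding C_def using c by simp
  have KK: "Re (\<Sum>j<n. sesq n A (k j) (k j)) \<le> C * S"
    unfolding k_def sum_sesq_frame_column C_def S_def
    by (rule Re_sum_overlap_sesq_le[OF psd X(1) c norm overlap])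
  have "0 \<le> (\<Sum>j<n. Re (sesq n A (\<lambda>i. e j i + complex_of_real r * k j i) (\<lambda>i. e j i + complex_of_real r * k j i)))"
    by (intro sum_nonneg sesq_psd_nonneg[OF psd])
  also have "\<dots> = Re (\<Sum>j<n. sesq n A (e j) (e j)) + 2 * r * Re (\<Sum>j<n. sesq n A (e j) (k j))
       + r\<^sup>2 * Re (\<Sum>j<n. sesq n A (k j) (k j))"
    unfolding sesq_add_scaled sesq_herm_swap[OF herm, of "k _" "e _"]
    by (simp add: sum.distrib sum_distrib_left power2_eq_square mult.assoc)
  also have "\<dots> = 1 + 2 * r * S + r\<^sup>2 * Re (\<Sum>j<n. sesq n A (k j) (k j))"
    unfolding e_def k_def sum_sesq_basis[OF carrier] sum_sesq_basis_frame_column tr S_def by simp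
  also have "\<dots> \<le> 1 + 2 * r * S + r\<^sup>2 * (C * S)"
    by (intro add_left_mono mult_left_mono KK) auto
  also have "\<dots> = 1 - S / C"
    unfolding r_def using C by (simp add: field_simps power2_eq_square)
  finally show ?thesis using C unfolding S_def C_def by (simp add: field_simps)
qed

section \<open>Projectors and their Gibbs states\<close>

lemma cscalar_prod_conv_sum:
  assumes "u \<in> carrier_vec n" and "w \<in> carrier_vec n"
  shows "conjugate u \<bullet> w = (\<Sum>j<n. cnj (u $ j) * w $ j)"
  using assms unfolding scalar_prod_def by (auto simp: atLeast0LessThan intro!: sum.cong)

definition normalized_vec :: "nat \<Rightarrow> complex vec \<Rightarrow> bool" where
  "normalized_vec n v \<longleftrightarrow> v \<in> carrier_vec n \<and> conjugate v \<bullet> v = 1"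

lemma normalized_vec_sum:
  "normalized_vec n v \<Longrightarrow> (\<Sum>j<n. cnj (v $ j) * v $ j) = 1"
  by (metis cscalar_prod_conv_sum normalized_vec_def)

lemma cinner_normalized: "normalized_vec n v \<Longrightarrow> cinner n (vec_index v) (vec_index v) = 1"
  by (simp add: cinner_def normalized_vec_sum)

lemma proj_carrier [simp]: "proj n v \<in> carrier_mat n n"
  and dim_row_proj [simp]: "dim_row (proj n v) = n"
  and dim_col_proj [simp]: "dim_col (proj n v) = n"
  unfolding proj_def by simp_all

lemma herm_proj: "herm n (proj n v)"
  unfolding herm_def proj_def by simp

lemma proj_mult_proj:
  assumes "normalized_vec n v"
  shows "proj n v * proj n v = proj n v"
proof (rule eq_matI)
  fix i j assume "i < dim_row (proj n v)" "j < dim_col (proj n v)"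
  then have ij: "i < n" "j < n" by simp_all
  have "(proj n v * proj n v) $$ (i,j) = (\<Sum>l<n. v $ i * cnj (v $ l) * (v $ l * cnj (v $ j)))"
    using ij by (simp add: proj_def scalar_prod_def row_def col_def atLeast0LessThan)
  also have "\<dots> = v $ i * cnj (v $ j) * (\<Sum>l<n. cnj (v $ l) * v $ l)"
    by (simp add: sum_distrib_left mult_ac)
  finally show "(proj n v * proj n v) $$ (i,j) = proj n v $$ (i,j)"
    using ij normalized_vec_sum[OF assms] by (simp add: proj_def)
qed (simp_all add: proj_def)

lemma smult_smult_mat: "a \<cdot>\<^sub>m (b \<cdot>\<^sub>m A) = (a * b :: 'a :: semigroup_mult) \<cdot>\<^sub>m A"
  by (rule eq_matI) (simp_all add: mult.assoc)

lemma power_smult_proj: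
  assumes "normalized_vec n v"
  shows "(c \<cdot>\<^sub>m proj n v) ^\<^sub>m Suc k = c ^ Suc k \<cdot>\<^sub>m proj n v"
proof (induction k)
  case 0
  then show ?case by simp
next
  case (Suc k)
  have "(c \<cdot>\<^sub>m proj n v) ^\<^sub>m Suc (Suc k) = (c ^ Suc k \<cdot>\<^sub>m proj n v) * (c \<cdot>\<^sub>m proj n v)"
    unfolding pow_mat.simps(2)[of _ "Suc k"] Suc.IH ..
  also have "\<dots> = c ^ Suc (Suc k) \<cdot>\<^sub>m (proj n v * proj n v)"
    by (simp add: mult_smult_assoc_mat[of _ n n _ n] mult_smult_distrib[of _ n n _ n] smult_smult_mat)
  also have "\<dots> = c ^ Suc (Suc k) \<cdot>\<^sub>m proj n v"
    by (simp add: proj_mult_proj[OF assms])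
  finally show ?case .
qed

lemma mexp_smult_proj:
  assumes "normalized_vec n v"
  shows "mexp n (c \<cdot>\<^sub>m proj n v) = 1\<^sub>m n + (exp c - 1) \<cdot>\<^sub>m proj n v"
proof (rule eq_matI)
  fix i j assume "i < dim_row (1\<^sub>m n + (exp c - 1) \<cdot>\<^sub>m proj n v)"
    "j < dim_col (1\<^sub>m n + (exp c - 1) \<cdot>\<^sub>m proj n v)"
  then have ij: "i < n" "j < n" by auto
  define P where "P = proj n v $$ (i,j)"
  define \<delta> :: complex where "\<delta> = (if i = j then 1 else 0)"
  have series_term: "((c \<cdot>\<^sub>m proj n v) ^\<^sub>m k) $$ (i,j) / of_nat (fact k)
      = P * (c ^ k /\<^sub>R fact k) + (if k = 0 then \<delta> - P else 0)" for k
  proof (cases k)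
    case (Suc m)
    then show ?thesis using ij
      by (simp add: power_smult_proj[OF assms] P_def scaleR_conv_of_real field_simps del: pow_mat.simps)
  qed (use ij in \<open>simp add: P_def \<delta>_def\<close>)
  have "(\<lambda>k. P * (c ^ k /\<^sub>R fact k) + (if k = 0 then \<delta> - P else 0)) sums (P * exp c + (\<delta> - P))"
    by (intro sums_add sums_mult exp_converges) (rule sums_single[of 0 "\<lambda>_. \<delta> - P", simplified])
  then have "(\<Sum>k. ((c \<cdot>\<^sub>m proj n v) ^\<^sub>m k) $$ (i,j) / of_nat (fact k)) = P * exp c + (\<delta> - P)"
    unfolding series_term by (rule sums_unique[symmetric])
  then show "mexp n (c \<cdot>\<^sub>m proj n v) $$ (i,j) = (1\<^sub>m n + (exp c - 1) \<cdot>\<^sub>m proj n v) $$ (i,j)"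
    unfolding mexp_def using ij by (simp add: P_def \<delta>_def algebra_simps)
qed (simp_all add: mexp_def)

lemma mtrace_add:
  "A \<in> carrier_mat n n \<Longrightarrow> B \<in> carrier_mat n n \<Longrightarrow> mtrace (A + B) = mtrace A + mtrace B"
  unfolding mtrace_def by (simp add: sum.distrib)

lemma mtrace_smult: "A \<in> carrier_mat n n \<Longrightarrow> mtrace (c \<cdot>\<^sub>m A) = c * mtrace A"
  unfolding mtrace_def by (simp add: sum_distrib_left)

lemma mtrace_one: "mtrace (1\<^sub>m n) = of_nat n"
  unfolding mtrace_def by simp

lemma mtrace_proj: "normalized_vec n v \<Longrightarrow> mtrace (proj n v) = 1"
  using normalized_vec_sum unfolding mtrace_def proj_def by (simp add: mult.commute)

lemma mtrace_proj_mult: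
  assumes "X \<in> carrier_mat n n"
  shows "mtrace (proj n v * X) = sesq n X (vec_index v) (vec_index v)"
proof -
  have "mtrace (proj n v * X) = (\<Sum>i<n. \<Sum>k<n. v $ i * cnj (v $ k) * X $$ (k,i))"
    unfolding mtrace_def using assms
    by (simp add: proj_def scalar_prod_def row_def col_def atLeast0LessThan)
  also have "\<dots> = (\<Sum>k<n. \<Sum>i<n. v $ i * cnj (v $ k) * X $$ (k,i))"
    by (rule sum.swap)
  finally show ?thesis unfolding sesq_def by (simp add: mult_ac)
qed

lemma sesq_proj:
  assumes "normalized_vec n v"
  shows "sesq n (proj n v) (vec_index v) (vec_index v) = 1"
proof -
  have "sesq n (proj n v) (vec_index v) (vec_index v)
      = (\<Sum>i<n. \<Sum>j<n. (cnj (v $ i) * v $ i) * (cnj (v $ j) * v $ j))"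
    unfolding sesq_def proj_def by (simp add: mult_ac)
  also have "\<dots> = (\<Sum>i<n. cnj (v $ i) * v $ i) * (\<Sum>j<n. cnj (v $ j) * v $ j)"
    by (simp add: sum_product)
  finally show ?thesis using normalized_vec_sum[OF assms] by simp
qed

text \<open>The Gibbs state of the Hamiltonian \<open>|v\<rangle>\<langle>v|\<close> has weight \<open>e\<^sup>-\<^sup>\<beta>\<close> on \<open>v\<close>
  and \<open>1\<close> on the \<open>n - 1\<close> orthogonal directions.\<close>
definition gibbs_overlap :: "nat \<Rightarrow> real \<Rightarrow> real" where
  "gibbs_overlap n \<beta> = exp (- \<beta>) / (real n - 1 + exp (- \<beta>))"

lemma mtrace_proj_mult_gibbs:
  assumes v: "normalized_vec n v"
  shows "mtrace (proj n v * gibbs n \<beta> p (proj n v)) = complex_of_real (p * gibbs_overlap n \<beta>)"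
proof -
  define e where "e = exp (- \<beta>)"
  define M where "M = mexp n ((- complex_of_real \<beta>) \<cdot>\<^sub>m proj n v)"
  have M: "M = 1\<^sub>m n + (complex_of_real e - 1) \<cdot>\<^sub>m proj n v"
  proof -
    have "exp (- complex_of_real \<beta>) = complex_of_real e"
      unfolding e_def by (simp add: exp_of_real[symmetric])
    then show ?thesis unfolding M_def mexp_smult_proj[OF v] by simp
  qed
  have "mtrace M = of_nat n + (complex_of_real e - 1)"
    unfolding M by (simp add: mtrace_add[of _ n] mtrace_smult[of _ n] mtrace_one mtrace_proj[OF v])
  moreover have "sesq n M (vec_index v) (vec_index v) = complex_of_real e"
    unfolding M by (simp add: sesq_add sesq_smult sesq_one sesq_proj[OF v] cinner_normalized[OF v])
  moreover have "mtrace (proj n v * gibbs n \<beta> p (proj n v))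
      = (complex_of_real p / mtrace M) * sesq n M (vec_index v) (vec_index v)"
    unfolding gibbs_def M_def[symmetric] M by (simp add: mtrace_proj_mult sesq_smult)
  ultimately show ?thesis unfolding gibbs_overlap_def e_def by simp
qed

lemma gibbs_overlap_bounds:
  assumes "2 \<le> n" and "0 < \<beta>"
  shows "0 < gibbs_overlap n \<beta>" and "gibbs_overlap n \<beta> < 1 / real n"
proof -
  have e: "0 < exp (- \<beta>)" "exp (- \<beta>) < 1" using assms(2) by auto
  have n: "real n \<ge> 2" using assms(1) by simp
  have den: "0 < real n - 1 + exp (- \<beta>)" using e n by linarith
  have "exp (- \<beta>) * (real n - 1) < 1 * (real n - 1)"
    using e n by (intro mult_strict_right_mono) auto
  then have "exp (- \<beta>) * real n < real n - 1 + exp (- \<beta>)"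
    by (simp add: algebra_simps)
  then show "gibbs_overlap n \<beta> < 1 / real n"
    using den n unfolding gibbs_overlap_def by (simp add: divide_simps mult.commute)
  show "0 < gibbs_overlap n \<beta>"
    using den e unfolding gibbs_overlap_def by simp
qed

section \<open>Assemblages built from a complete set of MUBs\<close>

lemma sum_weighted_le_Max:
  fixes f :: "'a \<Rightarrow> real"
  assumes "finite A" and "A \<noteq> {}" and "\<And>a. a \<in> A \<Longrightarrow> 0 \<le> p a" and "sum p A = 1"
  shows "(\<Sum>a\<in>A. p a * f a) \<le> Max (f ` A)"
proof -
  have "(\<Sum>a\<in>A. p a * f a) \<le> (\<Sum>a\<in>A. p a * Max (f ` A))"
    using assms by (intro sum_mono mult_left_mono) auto
  also have "\<dots> = Max (f ` A)"
    using assms by (simp add: sum_distrib_right[symmetric])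
  finally show ?thesis .
qed

definition maximally_mixed_assemblage :: "nat \<Rightarrow> nat \<Rightarrow> nat \<Rightarrow> complex mat" where
  "maximally_mixed_assemblage d a x = complex_of_real (1 / (real d)\<^sup>2) \<cdot>\<^sub>m 1\<^sub>m d"

lemma density_maximally_mixed:
  assumes "0 < n"
  shows "density n (complex_of_real (1 / real n) \<cdot>\<^sub>m 1\<^sub>m n)"
proof -
  have "0 \<le> Re (conjugate v \<bullet> (complex_of_real (1 / real n) \<cdot>\<^sub>m 1\<^sub>m n *\<^sub>v v))"
    if "v \<in> carrier_vec n" for v
    using that by (simp add: sesq_conv_scalar_prod[of _ n] sesq_smult sesq_one cinner_def sum_nonneg)
  moreover have "mtrace (complex_of_real (1 / real n) \<cdot>\<^sub>m 1\<^sub>m n) = 1"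
    using assms by (simp add: mtrace_smult[of _ n] mtrace_one)
  ultimately show ?thesis
    unfolding density_def psd_def herm_def by auto
qed

lemma unsteerable_maximally_mixed:
  assumes "0 < d"
  shows "unsteerable d d nx (maximally_mixed_assemblage d)"
  unfolding unsteerable_def
proof (intro exI[of _ "{0::nat}"] exI[of _ "\<lambda>_. 1::real"] exI[of _ "\<lambda>_ _ _. 1 / real d"]
    exI[of _ "\<lambda>_. complex_of_real (1 / real d) \<cdot>\<^sub>m 1\<^sub>m d"] conjI)
  show "\<forall>x<nx. \<forall>a<d. maximally_mixed_assemblage d a x \<in> carrier_mat d d \<and>
      (\<forall>i<d. \<forall>j<d. maximally_mixed_assemblage d a x $$ (i,j) =
        (\<Sum>l\<in>{0}. complex_of_real (1 * (1 / real d)) * (complex_of_real (1 / real d) \<cdot>\<^sub>m 1\<^sub>m d) $$ (i,j)))"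
    by (simp add: maximally_mixed_assemblage_def power2_eq_square)
  show "\<forall>l\<in>{0}. density d (complex_of_real (1 / real d) \<cdot>\<^sub>m 1\<^sub>m d)"
    using density_maximally_mixed[OF assms] by simp
  show "\<forall>l\<in>{0::nat}. \<forall>x<nx. (\<forall>a<d. 0 \<le> 1 / real d) \<and> (\<Sum>a<d. 1 / real d) = 1"
    using assms by simp
qed auto

lemma maximally_mixed_carrier: "maximally_mixed_assemblage d a x \<in> carrier_mat d d"
  by (simp add: maximally_mixed_assemblage_def)

lemma mtrace_maximally_mixed:
  "0 < d \<Longrightarrow> mtrace (maximally_mixed_assemblage d a x) = complex_of_real (1 / real d)"
  by (simp add: maximally_mixed_assemblage_def mtrace_smult[of _ d] mtrace_one power2_eq_square)

lemma ratio_le_xi_max: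
  assumes "\<forall>x<nx. \<forall>a<na. herm n (H a x)" and "0 < Qmax n na nx \<beta> \<rho> H"
  shows "ereal (Qc n na nx \<beta> \<rho> H / Qmax n na nx \<beta> \<rho> H) \<le> xi_max n na nx \<beta> \<rho>"
  unfolding xi_max_def using assms by (blast intro: Sup_upper)

locale complete_mub_system =
  fixes d :: nat and \<phi> :: "nat \<Rightarrow> nat \<Rightarrow> complex vec"
  assumes complete_MUB: "complete_MUB d \<phi>" and dim_pos: "0 < d"
begin

abbreviation mub_projectors :: "nat \<Rightarrow> nat \<Rightarrow> complex mat" where
  "mub_projectors \<equiv> \<lambda>a x. proj d (\<phi> x a)"

lemma mub_carrier: "x \<le> d \<Longrightarrow> a < d \<Longrightarrow> \<phi> x a \<in> carrier_vec d"
  using complete_MUB unfolding complete_MUB_def by blast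

lemma mub_normalized: "x \<le> d \<Longrightarrow> a < d \<Longrightarrow> normalized_vec d (\<phi> x a)"
  using complete_MUB mub_carrier unfolding complete_MUB_def normalized_vec_def by auto

lemma mub_overlap:
  assumes "x \<le> d" "y \<le> d" "x \<noteq> y" "a < d" "b < d"
  shows "cmod (cinner d (vec_index (\<phi> x a)) (vec_index (\<phi> y b))) = 1 / sqrt (real d)"
  using complete_MUB assms mub_carrier cscalar_prod_conv_sum unfolding complete_MUB_def cinner_def by metis

lemma mub_uncertainty:
  assumes A: "density d A" and choice: "\<And>x. x \<le> d \<Longrightarrow> choice x < d"
  shows "(\<Sum>x\<le>d. Re (sesq d A (vec_index (\<phi> x (choice x))) (vec_index (\<phi> x (choice x)))))
    \<le> 1 + sqrt (real d)"
proof -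
  have "(\<Sum>x\<le>d. Re (sesq d A (vec_index (\<phi> x (choice x))) (vec_index (\<phi> x (choice x)))))
      \<le> 1 + 1 / sqrt (real d) * (real (card {..d}) - 1)"
    using choice
    by (intro sum_sesq_le_overlap_bound[OF A])
      (auto simp: cinner_normalized mub_normalized mub_overlap)
  also have "\<dots> = 1 + sqrt (real d)"
    by (simp add: real_div_sqrt)
  finally show ?thesis .
qed

lemma state_response_mub_bound:
  assumes A: "density d A"
    and p: "\<And>x. x \<le> d \<Longrightarrow> (\<forall>a<d. 0 \<le> p a x) \<and> (\<Sum>a<d. p a x) = 1"
  shows "(\<Sum>x<d+1. \<Sum>a<d. p a x * Re (sesq d A (vec_index (\<phi> x a)) (vec_index (\<phi> x a))))
    \<le> 1 + sqrt (real d)"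
proof -
  define R where "R x a = Re (sesq d A (vec_index (\<phi> x a)) (vec_index (\<phi> x a)))" for x a
  have "\<forall>x. \<exists>a\<in>{..<d}. R x a = Max (R x ` {..<d})"
    using dim_pos by (metis Max_in finite_imageI finite_lessThan image_iff image_is_empty lessThan_empty_iff not_less0)
  then obtain choice where choice: "\<And>x. choice x < d" "\<And>x. R x (choice x) = Max (R x ` {..<d})"
    by (metis lessThan_iff)
  have "(\<Sum>x<d+1. \<Sum>a<d. p a x * R x a) \<le> (\<Sum>x<d+1. R x (choice x))"
    unfolding choice(2) using p dim_pos by (intro sum_mono sum_weighted_le_Max) auto
  also have "\<dots> = (\<Sum>x\<le>d. R x (choice x))"
    by (simp add: lessThan_Suc_atMost)
  also have "\<dots> \<le> 1 + sqrt (real d)"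
    unfolding R_def using choice(1) by (rule mub_uncertainty[OF A])
  finally show ?thesis unfolding R_def .
qed

definition mub_witness :: "(nat \<Rightarrow> nat \<Rightarrow> complex mat) \<Rightarrow> real" where
  "mub_witness \<sigma> = (\<Sum>x<d+1. \<Sum>a<d. Re (sesq d (\<sigma> a x) (vec_index (\<phi> x a)) (vec_index (\<phi> x a))))"

lemma unsteerable_mub_witness_le:
  assumes "unsteerable d d (d+1) \<sigma>"
  shows "mub_witness \<sigma> \<le> 1 + sqrt (real d)"
proof -
  obtain \<Lambda> :: "nat set" and pl :: "nat \<Rightarrow> real" and pax :: "nat \<Rightarrow> nat \<Rightarrow> nat \<Rightarrow> real" and sl where
    pl: "\<forall>l\<in>\<Lambda>. 0 \<le> pl l" "sum pl \<Lambda> = 1" and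
    pax: "\<forall>l\<in>\<Lambda>. \<forall>x<d+1. (\<forall>a<d. 0 \<le> pax a x l) \<and> (\<Sum>a<d. pax a x l) = 1" and
    sl: "\<forall>l\<in>\<Lambda>. density d (sl l)" and
    \<sigma>: "\<forall>x<d+1. \<forall>a<d. \<sigma> a x \<in> carrier_mat d d \<and>
      (\<forall>i<d. \<forall>j<d. \<sigma> a x $$ (i,j) = (\<Sum>l\<in>\<Lambda>. complex_of_real (pl l * pax a x l) * sl l $$ (i,j)))"
    using assms unfolding unsteerable_def by blast
  define R where "R l x a = Re (sesq d (sl l) (vec_index (\<phi> x a)) (vec_index (\<phi> x a)))" for l x a
  have "mub_witness \<sigma> = (\<Sum>x<d+1. \<Sum>a<d. \<Sum>l\<in>\<Lambda>. pl l * (pax a x l * R l x a))"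
    unfolding mub_witness_def
  proof (intro sum.cong refl)
    fix x a assume "x \<in> {..<d+1}" "a \<in> {..<d}"
    then show "Re (sesq d (\<sigma> a x) (vec_index (\<phi> x a)) (vec_index (\<phi> x a)))
        = (\<Sum>l\<in>\<Lambda>. pl l * (pax a x l * R l x a))"
      using \<sigma> by (subst sesq_sum_mat[where L = \<Lambda> and B = sl and c = "\<lambda>l. complex_of_real (pl l * pax a x l)"])
        (auto simp: R_def Re_sum mult.assoc)
  qed
  also have "\<dots> = (\<Sum>x<d+1. \<Sum>l\<in>\<Lambda>. \<Sum>a<d. pl l * (pax a x l * R l x a))"
    by (rule sum.cong[OF refl], rule sum.swap)
  also have "\<dots> = (\<Sum>l\<in>\<Lambda>. \<Sum>x<d+1. \<Sum>a<d. pl l * (pax a x l * R l x a))"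
    by (rule sum.swap)
  also have "\<dots> = (\<Sum>l\<in>\<Lambda>. pl l * (\<Sum>x<d+1. \<Sum>a<d. pax a x l * R l x a))"
    by (simp only: sum_distrib_left)
  also have "\<dots> \<le> (\<Sum>l\<in>\<Lambda>. pl l * (1 + sqrt (real d)))"
    unfolding R_def using pl pax sl
    by (intro sum_mono mult_left_mono state_response_mub_bound) auto
  also have "\<dots> = 1 + sqrt (real d)"
    using pl by (simp add: sum_distrib_right[symmetric])
  finally show ?thesis .
qed

lemma Qc_mub_projectors:
  assumes carrier: "\<And>x a. x \<le> d \<Longrightarrow> a < d \<Longrightarrow> \<tau> a x \<in> carrier_mat d d"
    and marginal: "\<And>x a. x \<le> d \<Longrightarrow> a < d \<Longrightarrow> Re (mtrace (\<tau> a x)) = 1 / real d"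
  shows "Qc d d (d+1) \<beta> \<tau> mub_projectors = mub_witness \<tau> / (real d + 1) - gibbs_overlap d \<beta>"
proof -
  define g where "g = gibbs_overlap d \<beta>"
  have "Qc d d (d+1) \<beta> \<tau> mub_projectors
      = (\<Sum>x<d+1. \<Sum>a<d. Re (sesq d (\<tau> a x) (vec_index (\<phi> x a)) (vec_index (\<phi> x a))) - g / real d)
        / (real d + 1)"
    unfolding Qc_def g_def
    by (simp add: mtrace_proj_mult carrier mtrace_proj_mult_gibbs mub_normalized marginal less_Suc_eq_le)
  also have "(\<Sum>x<d+1. \<Sum>a<d. Re (sesq d (\<tau> a x) (vec_index (\<phi> x a)) (vec_index (\<phi> x a))) - g / real d)
      = mub_witness \<tau> - (real d + 1) * (real d * (g / real d))"
    unfolding mub_witness_def by (simp only: sum_subtractf sum_constant card_lessThan of_nat_add of_nat_1)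
  finally show ?thesis
    using dim_pos unfolding g_def by (simp add: diff_divide_distrib)
qed

lemma rho_iso_carrier: "rho_iso d \<phi> \<eta> a x \<in> carrier_mat d d"
  by (simp add: rho_iso_def)

lemma mtrace_rho_iso:
  assumes "x \<le> d" "a < d"
  shows "mtrace (rho_iso d \<phi> \<eta> a x) = complex_of_real (1 / real d)"
proof -
  have "mtrace (rho_iso d \<phi> \<eta> a x) = complex_of_real (\<eta> / real d + (1 - \<eta>) / (real d)\<^sup>2 * real d)"
    unfolding rho_iso_def
    by (simp add: mtrace_add[of _ d] mtrace_smult[of _ d] mtrace_proj mub_normalized assms mtrace_one)
  also have "\<eta> / real d + (1 - \<eta>) / (real d)\<^sup>2 * real d = 1 / real d"
    using dim_pos by (simp add: field_simps power2_eq_square)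
  finally show ?thesis .
qed

lemma mub_witness_rho_iso: "mub_witness (rho_iso d \<phi> \<eta>) = (real d + 1) * ((1 + \<eta> * (real d - 1)) / real d)"
proof -
  have "Re (sesq d (rho_iso d \<phi> \<eta> a x) (vec_index (\<phi> x a)) (vec_index (\<phi> x a)))
      = \<eta> / real d + (1 - \<eta>) / (real d)\<^sup>2" if "x \<le> d" "a < d" for x a
    unfolding rho_iso_def
    by (simp add: sesq_add sesq_smult sesq_proj sesq_one cinner_normalized mub_normalized that)
  then have "mub_witness (rho_iso d \<phi> \<eta>) = (real d + 1) * (real d * (\<eta> / real d + (1 - \<eta>) / (real d)\<^sup>2))"
    unfolding mub_witness_def by (simp add: less_Suc_eq_le del: of_nat_Suc)
  also have "real d * (\<eta> / real d + (1 - \<eta>) / (real d)\<^sup>2) = (1 + \<eta> * (real d - 1)) / real d"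
    using dim_pos by (simp add: field_simps power2_eq_square)
  finally show ?thesis .
qed

lemma Qc_rho_iso:
  "Qc d d (d+1) \<beta> (rho_iso d \<phi> \<eta>) mub_projectors = (1 + \<eta> * (real d - 1)) / real d - gibbs_overlap d \<beta>"
  by (subst Qc_mub_projectors) (simp_all add: rho_iso_carrier mtrace_rho_iso mub_witness_rho_iso)

lemma maximally_mixed_in_Lrho: "maximally_mixed_assemblage d \<in> Lrho d d (d+1) (rho_iso d \<phi> \<eta>)"
  unfolding Lrho_def
  by (simp add: unsteerable_maximally_mixed dim_pos mtrace_maximally_mixed mtrace_rho_iso less_Suc_eq_le)

lemma Qc_maximally_mixed:
  "Qc d d (d+1) \<beta> (maximally_mixed_assemblage d) mub_projectors = 1 / real d - gibbs_overlap d \<beta>"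
proof -
  have "mub_witness (maximally_mixed_assemblage d) = (real d + 1) * (real d * (1 / (real d)\<^sup>2))"
    unfolding mub_witness_def
    by (simp add: maximally_mixed_assemblage_def sesq_smult sesq_one cinner_normalized mub_normalized
        less_Suc_eq_le del: of_nat_Suc)
  also have "real d * (1 / (real d)\<^sup>2) = 1 / real d"
    by (simp add: power2_eq_square)
  finally show ?thesis
    using dim_pos
    by (subst Qc_mub_projectors) (simp_all add: mtrace_maximally_mixed maximally_mixed_carrier)
qed

lemma Qc_Lrho_le:
  assumes "\<sigma> \<in> Lrho d d (d+1) (rho_iso d \<phi> \<eta>)"
  shows "Qc d d (d+1) \<beta> \<sigma> mub_projectors \<le> (1 + sqrt (real d)) / (real d + 1) - gibbs_overlap d \<beta>"
proof -
  have unsteerable: "unsteerable d d (d+1) \<sigma>"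
    and marginal: "\<And>x a. x \<le> d \<Longrightarrow> a < d \<Longrightarrow> mtrace (\<sigma> a x) = mtrace (rho_iso d \<phi> \<eta> a x)"
    using assms unfolding Lrho_def by auto
  have "\<sigma> a x \<in> carrier_mat d d" if "x \<le> d" "a < d" for x a
    using unsteerable that unfolding unsteerable_def by auto
  then have "Qc d d (d+1) \<beta> \<sigma> mub_projectors = mub_witness \<sigma> / (real d + 1) - gibbs_overlap d \<beta>"
    by (intro Qc_mub_projectors) (simp_all add: marginal mtrace_rho_iso)
  also have "\<dots> \<le> (1 + sqrt (real d)) / (real d + 1) - gibbs_overlap d \<beta>"
    using unsteerable_mub_witness_le[OF unsteerable] by (intro diff_right_mono divide_right_mono) auto
  finally show ?thesis .
qed

lemma Qmax_rho_iso_bounds: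
  "1 / real d - gibbs_overlap d \<beta> \<le> Qmax d d (d+1) \<beta> (rho_iso d \<phi> \<eta>) mub_projectors"
  "Qmax d d (d+1) \<beta> (rho_iso d \<phi> \<eta>) mub_projectors \<le> (1 + sqrt (real d)) / (real d + 1) - gibbs_overlap d \<beta>"
proof -
  define Y where "Y = (\<lambda>\<sigma>. Qc d d (d+1) \<beta> \<sigma> mub_projectors) ` Lrho d d (d+1) (rho_iso d \<phi> \<eta>)"
  have Y: "y \<le> (1 + sqrt (real d)) / (real d + 1) - gibbs_overlap d \<beta>" if "y \<in> Y" for y
    using that Qc_Lrho_le unfolding Y_def by blast
  have bdd: "bdd_above Y"
    using Y by (rule bdd_aboveI)
  have "1 / real d - gibbs_overlap d \<beta> \<in> Y"
    unfolding Y_def Qc_maximally_mixed[symmetric] using maximally_mixed_in_Lrho by blast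
  then show "1 / real d - gibbs_overlap d \<beta> \<le> Qmax d d (d+1) \<beta> (rho_iso d \<phi> \<eta>) mub_projectors"
    "Qmax d d (d+1) \<beta> (rho_iso d \<phi> \<eta>) mub_projectors \<le> (1 + sqrt (real d)) / (real d + 1) - gibbs_overlap d \<beta>"
    unfolding Qmax_def Y_def[symmetric] using Y bdd by (auto intro: cSup_upper cSup_least)
qed

end

section \<open>The steering bound\<close>

lemma divide_le_shifted_divide:
  fixes a b g q :: real
  assumes "0 < q" and "q \<le> b - g" and "0 < g" and "b \<le> a"
  shows "a / b \<le> (a - g) / q"
proof -
  have "a / b \<le> (a - g) / (b - g)"
    using assms by (simp add: divide_simps) (simp add: algebra_simps mult_left_mono)
  also have "\<dots> \<le> (a - g) / q"
    using assms by (intro divide_left_mono) auto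
  finally show ?thesis .
qed

lemma iso_bound_gt_one:
  fixes d :: nat and \<eta> :: real
  assumes d: "2 \<le> d" and \<eta>: "\<eta> > 1 / (sqrt (real d) + 1 / (real d + sqrt (real d) + 1))"
  shows "(real d + 1) * (1 + \<eta> * (real d - 1)) / (real d * (1 + sqrt (real d))) > 1"
proof -
  define s where "s = sqrt (real d)"
  have ss: "s * s = real d" and s1: "s > 1" unfolding s_def using d by simp_all
  have pos: "0 < (s + 1) * (real d + 1)" and "0 < real d + s + 1" using s1 by simp_all
  then have "s + 1 / (real d + s + 1) = (s + 1) * (real d + 1) / (real d + s + 1)"
    using ss by (simp add: field_simps)
  then have "(real d + s + 1) / ((s + 1) * (real d + 1)) < \<eta>"
    using \<eta> unfolding s_def[symmetric] by simp
  then have "\<eta> * ((s + 1) * (real d + 1)) > real d + s + 1"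
    using pos by (simp add: pos_divide_less_eq)
  then have "\<eta> * ((s + 1) * (real d + 1)) * (s - 1) > (real d + s + 1) * (s - 1)"
    using s1 by (intro mult_strict_right_mono) auto
  also have "\<eta> * ((s + 1) * (real d + 1)) * (s - 1) = \<eta> * (s * s - 1) * (real d + 1)"
    by (simp add: algebra_simps)
  also have "(real d + s + 1) * (s - 1) = real d * s - 1 + (s * s - real d)"
    by (simp add: algebra_simps)
  finally have "(real d + 1) * (1 + \<eta> * (real d - 1)) > real d * (1 + s)"
    unfolding ss by (simp add: algebra_simps)
  moreover have "real d * (1 + s) > 0" using d s1 by simp
  ultimately show ?thesis unfolding s_def[symmetric] by simp
qed

lemma prime_power_ge_2:
  assumes "prime_power d"
  shows "2 \<le> d"
proof -
  obtain p k where p: "prime p" and "1 \<le> k" and d: "d = p ^ k"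
    using assms unfolding prime_power_def by blast
  then have "p ^ 1 \<le> d"
    using prime_gt_0_nat[OF p] by (simp only: d) (rule power_increasing, simp_all)
  then show ?thesis using prime_ge_2_nat[OF p] by simp
qed

theorem mainTheorem4:
  fixes d :: nat and \<beta> \<eta> :: real and \<phi> :: "nat \<Rightarrow> nat \<Rightarrow> complex vec"
  assumes "prime_power d" and "\<beta> > 0" and "0 \<le> \<eta>" and "\<eta> \<le> 1"
    and "complete_MUB d \<phi>"
    and "\<eta> > 1 / (sqrt (real d) + 1 / (real d + sqrt (real d) + 1))"
  shows "ereal ((real d + 1) * (1 + \<eta> * (real d - 1)) / (real d * (1 + sqrt (real d))))
           \<le> xi_max d d (d + 1) \<beta> (rho_iso d \<phi> \<eta>)
       \<and> (real d + 1) * (1 + \<eta> * (real d - 1)) / (real d * (1 + sqrt (real d))) > 1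
       \<and> (\<eta> = 1 \<longrightarrow> ereal ((real d + 1) / (sqrt (real d) + 1))
              \<le> xi_max d d (d + 1) \<beta> (rho_iso d \<phi> \<eta>))"
proof -
  have d: "2 \<le> d" using assms(1) by (rule prime_power_ge_2)
  interpret complete_mub_system d \<phi> using assms(5) d by unfold_locales auto
  define T where "T = (real d + 1) * (1 + \<eta> * (real d - 1)) / (real d * (1 + sqrt (real d)))"
  define A where "A = (1 + \<eta> * (real d - 1)) / real d"
  define B where "B = (1 + sqrt (real d)) / (real d + 1)"
  define Q where "Q = Qmax d d (d+1) \<beta> (rho_iso d \<phi> \<eta>) mub_projectors"
  note g = gibbs_overlap_bounds[OF d assms(2)]
  have Q: "0 < Q" "Q \<le> B - gibbs_overlap d \<beta>"
    using Qmax_rho_iso_bounds[of \<beta> \<eta>] g unfolding Q_def B_def by auto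
  have T_gt_1: "T > 1" unfolding T_def using d assms(6) by (rule iso_bound_gt_one)
  have T: "T = A / B" unfolding T_def A_def B_def by (simp add: field_simps)
  have "B \<le> A" using T_gt_1 unfolding T B_def by (simp add: divide_simps add_pos_nonneg)
  then have "ereal T \<le> ereal (Qc d d (d+1) \<beta> (rho_iso d \<phi> \<eta>) mub_projectors / Q)"
    unfolding T Qc_rho_iso A_def[symmetric] using Q g by (simp add: divide_le_shifted_divide)
  also have "\<dots> \<le> xi_max d d (d + 1) \<beta> (rho_iso d \<phi> \<eta>)"
    unfolding Q_def using Q herm_proj by (intro ratio_le_xi_max) (auto simp: Q_def)
  finally have xi: "ereal T \<le> xi_max d d (d + 1) \<beta> (rho_iso d \<phi> \<eta>)" .
  have "T = (real d + 1) / (sqrt (real d) + 1)" if "\<eta> = 1"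
  proof -
    have "T = real d * (real d + 1) / (real d * (sqrt (real d) + 1))"
      unfolding T_def that by (simp add: algebra_simps)
    then show ?thesis using d by simp
  qed
  then show ?thesis using xi T_gt_1 unfolding T_def by auto
qed

end
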